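(* Let $0<r<1$ and $c>0$. For every extremally disconnected set $S$, the set $C(S,\mathbb{Z}((T))_{r,\le c})$ of continuous maps from $S$ to the topological space $\mathbb{Z}((T))_{r,\le c}$ is identified (via $F\mapsto$ its coefficient functions) with the set of formal sums $\sum_{n\ge k}a_nT^n$, for some $k\in\mathbb{Z}$, with $a_n\in C(S,\mathbb{Z})$ and $\sum_n|a_n(s)|r^n\le c$ for all $s\in S$. In other words, the condensed set defined by the latter sets is the condensation of the topological space $\mathbb{Z}((T))_{r,\le c}$.
   Context: $\mathbb{Z}((T))_{r,\le c}$ is the set of integer Laurent series $\sum_{n\gg-\infty}a_nT^n$ ($a_n\in\mathbb{Z}$, $a_n=0$ for $n$ sufficiently negative) with $\sum|a_n|r^n\le c$, topologized by the $T$-adic norm $\|f\|=\delta^{v_T(f)}$ for a fixed $\delta\in(0,1)$, where $v_T(f)$ is the smallest $n$ with $a_n\ne 0$ (so two series are close iff their coefficients agree up to a large index). An extremally disconnected set is a projective object in compact Hausdorff spaces; the condensation of a T1 space $X$ is $S\mapsto C(S,X)$. $\mathbb{Z}$ carries the discrete topology. *)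

theory Defs
  imports "HOL-Analysis.Analysis"
begin

text \<open>Integer Laurent series are modelled as coefficient functions int => int whose
support is bounded below.\<close>

definition laurent_r_c :: "real \<Rightarrow> real \<Rightarrow> (int \<Rightarrow> int) set" where
  "laurent_r_c r c = {f. (\<exists>k. \<forall>n<k. f n = 0)
      \<and> (\<lambda>n. real_of_int \<bar>f n\<bar> * r powi n) summable_on UNIV
      \<and> (\<Sum>\<^sub>\<infinity>n. real_of_int \<bar>f n\<bar> * r powi n) \<le> c}"

text \<open>T-adic valuation: smallest index with nonzero coefficient (used for nonzero series).\<close>
definition tval :: "(int \<Rightarrow> int) \<Rightarrow> int" where
  "tval h = Inf {n. h n \<noteq> 0}"

definition Tnorm :: "real \<Rightarrow> (int \<Rightarrow> int) \<Rightarrow> real" where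
  "Tnorm \<delta> h = (if h = (\<lambda>_. 0) then 0 else \<delta> powi tval h)"

definition laurent_topology :: "real \<Rightarrow> real \<Rightarrow> real \<Rightarrow> (int \<Rightarrow> int) topology" where
  "laurent_topology \<delta> r c = topology (\<lambda>U. U \<subseteq> laurent_r_c r c \<and>
      (\<forall>f\<in>U. \<exists>e>0. \<forall>g\<in>laurent_r_c r c. Tnorm \<delta> (\<lambda>n. g n - f n) < e \<longrightarrow> g \<in> U))"

text \<open>Extremally disconnected compact Hausdorff space (= projective compact Hausdorff
space, by Gleason's theorem).\<close>
definition extremally_disconnected :: "'a topology \<Rightarrow> bool" where
  "extremally_disconnected S \<longleftrightarrow> compact_space S \<and> Hausdorff_space S \<and>
      (\<forall>U. openin S U \<longrightarrow> openin S (S closure_of U))"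

end

theory Submission
  imports Defs
begin

text \<open>The sets of series agreeing with a given one below a fixed index N form a neighbourhood
base of the T-adic topology, so a map F from S is continuous iff around every point, for every
N, there is a neighbourhood on which the coefficients below N are constant. When all supports
are bounded below by one k, only the finitely many coefficients of index k..N-1 matter, and this
is just continuity of every coefficient into the discrete space \<int>. Conversely a continuous F
has supports bounded below uniformly: each point has a neighbourhood on which F agrees with its
value below the start of that value's support, and finitely many of them cover the compact S.\<close>

lemma istopology_Tnorm_neighbourhoods:
  "istopology (\<lambda>U. U \<subseteq> L \<and>
      (\<forall>f\<in>U. \<exists>e>0. \<forall>g\<in>L. Tnorm \<delta> (\<lambda>n. g n - f n) < e \<longrightarrow> g \<in> U))"
  unfolding istopology_def
proof (rule conjI; intro allI impI)
  fix U V :: "(int \<Rightarrow> int) set"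
  assume U: "U \<subseteq> L \<and> (\<forall>f\<in>U. \<exists>e>0. \<forall>g\<in>L. Tnorm \<delta> (\<lambda>n. g n - f n) < e \<longrightarrow> g \<in> U)"
    and V: "V \<subseteq> L \<and> (\<forall>f\<in>V. \<exists>e>0. \<forall>g\<in>L. Tnorm \<delta> (\<lambda>n. g n - f n) < e \<longrightarrow> g \<in> V)"
  show "U \<inter> V \<subseteq> L \<and> (\<forall>f\<in>U \<inter> V. \<exists>e>0. \<forall>g\<in>L. Tnorm \<delta> (\<lambda>n. g n - f n) < e \<longrightarrow> g \<in> U \<inter> V)"
  proof (intro conjI ballI)
    fix f assume "f \<in> U \<inter> V"
    then obtain e1 e2 where "e1 > 0" "e2 > 0"
      "\<forall>g\<in>L. Tnorm \<delta> (\<lambda>n. g n - f n) < e1 \<longrightarrow> g \<in> U"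
      "\<forall>g\<in>L. Tnorm \<delta> (\<lambda>n. g n - f n) < e2 \<longrightarrow> g \<in> V"
      using U V by blast
    then show "\<exists>e>0. \<forall>g\<in>L. Tnorm \<delta> (\<lambda>n. g n - f n) < e \<longrightarrow> g \<in> U \<inter> V"
      by (intro exI[of _ "min e1 e2"]) auto
  qed (use U in auto)
next
  fix \<U> :: "(int \<Rightarrow> int) set set"
  assume H: "\<forall>U\<in>\<U>. U \<subseteq> L \<and> (\<forall>f\<in>U. \<exists>e>0. \<forall>g\<in>L. Tnorm \<delta> (\<lambda>n. g n - f n) < e \<longrightarrow> g \<in> U)"
  show "\<Union>\<U> \<subseteq> L \<and> (\<forall>f\<in>\<Union>\<U>. \<exists>e>0. \<forall>g\<in>L. Tnorm \<delta> (\<lambda>n. g n - f n) < e \<longrightarrow> g \<in> \<Union>\<U>)"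
  proof (intro conjI ballI)
    fix f assume "f \<in> \<Union>\<U>"
    then obtain U where "U \<in> \<U>" "f \<in> U" by blast
    moreover from this obtain e where "e > 0" "\<forall>g\<in>L. Tnorm \<delta> (\<lambda>n. g n - f n) < e \<longrightarrow> g \<in> U"
      using H by meson
    ultimately show "\<exists>e>0. \<forall>g\<in>L. Tnorm \<delta> (\<lambda>n. g n - f n) < e \<longrightarrow> g \<in> \<Union>\<U>"
      by blast
  qed (use H in blast)
qed

lemma openin_laurent_topology:
  "openin (laurent_topology \<delta> r c) U \<longleftrightarrow> U \<subseteq> laurent_r_c r c \<and>
      (\<forall>f\<in>U. \<exists>e>0. \<forall>g\<in>laurent_r_c r c. Tnorm \<delta> (\<lambda>n. g n - f n) < e \<longrightarrow> g \<in> U)"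
  unfolding laurent_topology_def using istopology_Tnorm_neighbourhoods by simp

lemma topspace_laurent_topology: "topspace (laurent_topology \<delta> r c) = laurent_r_c r c"
proof -
  have "openin (laurent_topology \<delta> r c) (laurent_r_c r c)"
    unfolding openin_laurent_topology by (auto intro: exI[of _ 1])
  then show ?thesis
    unfolding topspace_def using openin_laurent_topology by blast
qed

lemma Tnorm_le_powi_if_vanishing_below:
  assumes "0 < \<delta>" "\<delta> \<le> 1" "\<forall>m<N. h m = 0"
  shows "Tnorm \<delta> h \<le> \<delta> powi N"
proof (cases "h = (\<lambda>_. 0)")
  case True
  then show ?thesis using assms by (simp add: Tnorm_def)
next
  case False
  then have "{n. h n \<noteq> 0} \<noteq> {}" by auto
  then have "N \<le> tval h"
    unfolding tval_def by (rule cInf_greatest) (use assms(3) not_less in blast)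
  then have "\<delta> powi tval h \<le> \<delta> powi N"
    using assms by (intro power_int_decreasing) auto
  then show ?thesis using False by (simp add: Tnorm_def)
qed

lemma vanishing_below_if_Tnorm_less_powi:
  assumes "0 < \<delta>" "\<delta> \<le> 1" "bdd_below {n. h n \<noteq> 0}" "Tnorm \<delta> h < \<delta> powi N" "m < N"
  shows "h m = 0"
proof (rule ccontr)
  assume hm: "h m \<noteq> 0"
  then have "tval h \<le> m"
    unfolding tval_def using assms(3) by (intro cInf_lower) auto
  then have "\<delta> powi N \<le> \<delta> powi tval h"
    using assms by (intro power_int_decreasing) auto
  moreover have "h \<noteq> (\<lambda>_. 0)" using hm by auto
  ultimately show False using assms(4) by (simp add: Tnorm_def)
qed

lemma bdd_below_support_diff_laurent_r_c:
  assumes "f \<in> laurent_r_c r c" "g \<in> laurent_r_c r c"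
  shows "bdd_below {n. g n - f n \<noteq> 0}"
proof -
  obtain k1 k2 where "\<forall>n<k1. f n = 0" "\<forall>n<k2. g n = 0"
    using assms by (auto simp: laurent_r_c_def)
  then have "min k1 k2 \<le> n" if "g n - f n \<noteq> 0" for n
    using that by (metis diff_self min.coboundedI1 min.coboundedI2 not_le)
  then show ?thesis by (auto simp: bdd_below_def)
qed

lemma openin_laurent_cylinder:
  assumes "0 < \<delta>" "\<delta> \<le> 1"
  shows "openin (laurent_topology \<delta> r c) {g \<in> laurent_r_c r c. \<forall>m<N. g m = f m}"
  unfolding openin_laurent_topology
proof (intro conjI ballI)
  fix p assume p: "p \<in> {g \<in> laurent_r_c r c. \<forall>m<N. g m = f m}"
  show "\<exists>e>0. \<forall>q\<in>laurent_r_c r c. Tnorm \<delta> (\<lambda>n. q n - p n) < e \<longrightarrow>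
          q \<in> {g \<in> laurent_r_c r c. \<forall>m<N. g m = f m}"
  proof (intro exI[of _ "\<delta> powi N"] conjI ballI impI)
    fix q assume q: "q \<in> laurent_r_c r c" "Tnorm \<delta> (\<lambda>n. q n - p n) < \<delta> powi N"
    have "bdd_below {n. q n - p n \<noteq> 0}"
      using bdd_below_support_diff_laurent_r_c[of p r c q] p q(1) by simp
    then have "q m - p m = 0" if "m < N" for m
      using vanishing_below_if_Tnorm_less_powi[OF assms _ q(2) that] by blast
    then show "q \<in> {g \<in> laurent_r_c r c. \<forall>m<N. g m = f m}" using p q(1) by auto
  qed (use assms in simp)
qed auto

definition truncations_locally_constant :: "'a topology \<Rightarrow> ('a \<Rightarrow> int \<Rightarrow> 'b) \<Rightarrow> bool" where
  "truncations_locally_constant S F \<longleftrightarrow>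
     (\<forall>s\<in>topspace S. \<forall>N. \<exists>V. openin S V \<and> s \<in> V \<and> (\<forall>t\<in>V. \<forall>m<N. F t m = F s m))"

lemma continuous_map_laurent_topology_iff:
  assumes "0 < \<delta>" "\<delta> < 1"
  shows "continuous_map S (laurent_topology \<delta> r c) F \<longleftrightarrow>
    (\<forall>s\<in>topspace S. F s \<in> laurent_r_c r c) \<and> truncations_locally_constant S F"
proof safe
  fix s assume "continuous_map S (laurent_topology \<delta> r c) F" "s \<in> topspace S"
  then show "F s \<in> laurent_r_c r c"
    by (simp add: continuous_map_def topspace_laurent_topology Pi_iff)
next
  assume cont: "continuous_map S (laurent_topology \<delta> r c) F"
  show "truncations_locally_constant S F"
    unfolding truncations_locally_constant_def
  proof (intro ballI allI)
    fix s N assume s: "s \<in> topspace S"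
    then have Fs: "F s \<in> laurent_r_c r c"
      using cont by (simp add: continuous_map_def topspace_laurent_topology Pi_iff)
    have at_s: "topcontinuous_at S (laurent_topology \<delta> r c) F s"
      using cont s by (simp add: continuous_map_eq_topcontinuous_at)
    define C where "C = {g \<in> laurent_r_c r c. \<forall>m<N. g m = F s m}"
    have "openin (laurent_topology \<delta> r c) C"
      unfolding C_def using assms by (intro openin_laurent_cylinder) auto
    moreover have "F s \<in> C"
      by (simp add: C_def Fs)
    ultimately obtain V where "openin S V" "s \<in> V" "\<forall>t\<in>V. F t \<in> C"
      using at_s unfolding topcontinuous_at_def by blast
    then show "\<exists>V. openin S V \<and> s \<in> V \<and> (\<forall>t\<in>V. \<forall>m<N. F t m = F s m)"
      unfolding C_def by blast
  qed
next
  assume in_L: "\<forall>s\<in>topspace S. F s \<in> laurent_r_c r c"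
    and truncations: "truncations_locally_constant S F"
  show "continuous_map S (laurent_topology \<delta> r c) F"
    unfolding continuous_map_eq_topcontinuous_at topcontinuous_at_def topspace_laurent_topology
  proof (intro ballI conjI allI impI funcsetI)
    fix s U assume s: "s \<in> topspace S" and U: "openin (laurent_topology \<delta> r c) U \<and> F s \<in> U"
    then obtain e where e: "e > 0" "\<forall>g\<in>laurent_r_c r c. Tnorm \<delta> (\<lambda>n. g n - F s n) < e \<longrightarrow> g \<in> U"
      unfolding openin_laurent_topology by blast
    obtain N :: nat where N: "\<delta> ^ N < e"
      using real_arch_pow_inv[OF e(1) assms(2)] by blast
    obtain V where V: "openin S V" "s \<in> V" "\<forall>t\<in>V. \<forall>m<int N. F t m = F s m"
      using truncations s unfolding truncations_locally_constant_def by blast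
    have "F t \<in> U" if t: "t \<in> V" for t
    proof -
      have "F t \<in> laurent_r_c r c"
        using in_L V(1) t openin_subset by blast
      moreover have "Tnorm \<delta> (\<lambda>n. F t n - F s n) \<le> \<delta> powi int N"
        using V(3) t assms by (intro Tnorm_le_powi_if_vanishing_below) auto
      ultimately show ?thesis
        using e(2) N by fastforce
    qed
    then show "\<exists>V. openin S V \<and> s \<in> V \<and> (\<forall>t\<in>V. F t \<in> U)"
      using V by blast
  qed (use in_L in auto)
qed

lemma continuous_map_discrete_iff_locally_constant:
  "continuous_map X (discrete_topology UNIV) f \<longleftrightarrow>
     (\<forall>x\<in>topspace X. \<exists>U. openin X U \<and> x \<in> U \<and> (\<forall>y\<in>U. f y = f x))"
proof (intro iffI ballI)
  fix x assume "continuous_map X (discrete_topology UNIV) f" "x \<in> topspace X"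
  then have "openin X {y \<in> topspace X. f y \<in> {f x}}"
    by (intro openin_continuous_map_preimage) auto
  then show "\<exists>U. openin X U \<and> x \<in> U \<and> (\<forall>y\<in>U. f y = f x)"
    using \<open>x \<in> topspace X\<close> by (intro exI) auto
next
  assume H: "\<forall>x\<in>topspace X. \<exists>U. openin X U \<and> x \<in> U \<and> (\<forall>y\<in>U. f y = f x)"
  show "continuous_map X (discrete_topology UNIV) f"
    unfolding continuous_map_eq_topcontinuous_at topcontinuous_at_def
  proof (intro ballI conjI allI impI)
    fix x V assume "x \<in> topspace X" "openin (discrete_topology UNIV) V \<and> f x \<in> V"
    then show "\<exists>U. openin X U \<and> x \<in> U \<and> (\<forall>y\<in>U. f y \<in> V)"
      using H by metis
  qed auto
qed

lemma uniform_support_bound_if_compact: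
  fixes F :: "'a \<Rightarrow> int \<Rightarrow> 'b::zero"
  assumes "compact_space S"
    and support: "\<forall>s\<in>topspace S. \<exists>k. \<forall>n<k. F s n = 0"
    and "truncations_locally_constant S F"
  shows "\<exists>k. \<forall>s\<in>topspace S. \<forall>n<k. F s n = 0"
proof -
  from bchoice[OF support] obtain k where k: "\<forall>s\<in>topspace S. \<forall>n<k s. F s n = 0"
    by blast
  have "\<forall>s\<in>topspace S. \<exists>V. openin S V \<and> s \<in> V \<and> (\<forall>t\<in>V. \<forall>m<k s. F t m = F s m)"
    using assms(3) unfolding truncations_locally_constant_def by blast
  from bchoice[OF this] obtain V
    where V: "\<forall>s\<in>topspace S. openin S (V s) \<and> s \<in> V s \<and> (\<forall>t\<in>V s. \<forall>m<k s. F t m = F s m)"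
    by blast
  then have "(\<forall>U\<in>V ` topspace S. openin S U) \<and> topspace S \<subseteq> \<Union>(V ` topspace S)"
    by blast
  then obtain \<F> where "finite \<F>" "\<F> \<subseteq> V ` topspace S" "topspace S \<subseteq> \<Union>\<F>"
    using assms(1) unfolding compact_space_alt by meson
  then obtain T where T: "finite T" "T \<subseteq> topspace S" "topspace S \<subseteq> (\<Union>s\<in>T. V s)"
    by (metis finite_subset_image)
  define k0 where "k0 = Min (insert 0 (k ` T))"
  have "F t n = 0" if t: "t \<in> topspace S" and n: "n < k0" for t n
  proof -
    obtain s where s: "s \<in> T" "t \<in> V s" using T(3) t by blast
    then have "s \<in> topspace S" using T(2) by blast
    have "k0 \<le> k s" unfolding k0_def using T(1) s(1) by (intro Min_le) auto
    with n have "n < k s" by linarith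
    then have "F t n = F s n" "F s n = 0"
      using \<open>s \<in> topspace S\<close> s(2) k V by blast+
    then show ?thesis by simp
  qed
  then show ?thesis by blast
qed

lemma truncations_locally_constant_iff_coefficients_continuous:
  fixes F :: "'a \<Rightarrow> int \<Rightarrow> 'b::zero"
  assumes "\<forall>s\<in>topspace S. \<forall>n<k. F s n = 0"
  shows "truncations_locally_constant S F \<longleftrightarrow>
    (\<forall>n. continuous_map S (discrete_topology UNIV) (\<lambda>s. F s n))"
  unfolding truncations_locally_constant_def
proof (intro iffI allI ballI)
  fix n
  assume "\<forall>s\<in>topspace S. \<forall>N. \<exists>V. openin S V \<and> s \<in> V \<and> (\<forall>t\<in>V. \<forall>m<N. F t m = F s m)"
  then have "\<exists>V. openin S V \<and> s \<in> V \<and> (\<forall>t\<in>V. F t n = F s n)" if "s \<in> topspace S" for s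
    using that by (meson less_add_one)
  then show "continuous_map S (discrete_topology UNIV) (\<lambda>s. F s n)"
    unfolding continuous_map_discrete_iff_locally_constant by blast
next
  fix s N
  assume cont: "\<forall>n. continuous_map S (discrete_topology UNIV) (\<lambda>s. F s n)"
    and s: "s \<in> topspace S"
  define V where "V = (\<Inter>m\<in>{k..<N}. {t \<in> topspace S. F t m \<in> {F s m}}) \<inter> topspace S"
  have "openin S V"
    unfolding V_def using cont by (intro openin_INT openin_continuous_map_preimage) auto
  moreover have "F t m = F s m" if "t \<in> V" "m < N" for t m
  proof (cases "m < k")
    case True
    then show ?thesis using assms s \<open>t \<in> V\<close> by (simp add: V_def)
  next
    case False
    then show ?thesis using \<open>t \<in> V\<close> \<open>m < N\<close> by (simp add: V_def)
  qed
  moreover have "s \<in> V"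
    unfolding V_def using s by blast
  ultimately show "\<exists>V. openin S V \<and> s \<in> V \<and> (\<forall>t\<in>V. \<forall>m<N. F t m = F s m)"
    by blast
qed

lemma continuous_map_laurent_topology_iff_coefficients:
  assumes "0 < \<delta>" "\<delta> < 1" "compact_space S"
  shows "continuous_map S (laurent_topology \<delta> r c) F \<longleftrightarrow>
    (\<forall>s\<in>topspace S. F s \<in> laurent_r_c r c) \<and> (\<exists>k. \<forall>s\<in>topspace S. \<forall>n<k. F s n = 0) \<and>
    (\<forall>n. continuous_map S (discrete_topology UNIV) (\<lambda>s. F s n))"
  (is "_ \<longleftrightarrow> ?in_L \<and> ?bounded \<and> ?coefficients")
proof
  assume "continuous_map S (laurent_topology \<delta> r c) F"
  then have in_L: ?in_L and truncations: "truncations_locally_constant S F"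
    unfolding continuous_map_laurent_topology_iff[OF assms(1,2)] by blast+
  have "\<forall>s\<in>topspace S. \<exists>k. \<forall>n<k. F s n = 0"
    using in_L by (simp add: laurent_r_c_def)
  then obtain k where k: "\<forall>s\<in>topspace S. \<forall>n<k. F s n = 0"
    using uniform_support_bound_if_compact[OF assms(3) _ truncations] by blast
  moreover have ?coefficients
    using truncations_locally_constant_iff_coefficients_continuous[OF k] truncations by blast
  ultimately show "?in_L \<and> ?bounded \<and> ?coefficients"
    using in_L by blast
next
  assume "?in_L \<and> ?bounded \<and> ?coefficients"
  then obtain k where in_L: ?in_L and k: "\<forall>s\<in>topspace S. \<forall>n<k. F s n = 0"
    and coefficients: ?coefficients
    by blast
  have "truncations_locally_constant S F"
    using truncations_locally_constant_iff_coefficients_continuous[OF k] coefficients by blast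
  with in_L show "continuous_map S (laurent_topology \<delta> r c) F"
    unfolding continuous_map_laurent_topology_iff[OF assms(1,2)] by blast
qed

lemma continuous_map_laurent_topology_iff_coefficients_vanishing:
  assumes "0 < \<delta>" "\<delta> < 1" "compact_space S"
    and vanishing: "\<forall>n s. s \<notin> topspace S \<longrightarrow> F s n = 0"
  shows "continuous_map S (laurent_topology \<delta> r c) F \<longleftrightarrow>
    (\<exists>k. \<forall>n<k. \<forall>s. F s n = 0) \<and>
    (\<forall>n. continuous_map S (discrete_topology UNIV) (\<lambda>s. F s n)) \<and>
    (\<forall>s\<in>topspace S. (\<lambda>n. real_of_int \<bar>F s n\<bar> * r powi n) summable_on UNIV
       \<and> (\<Sum>\<^sub>\<infinity>n. real_of_int \<bar>F s n\<bar> * r powi n) \<le> c)"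
    (is "_ \<longleftrightarrow> ?bounded \<and> ?coefficients \<and> ?summable")
proof -
  have bounded_iff: "?bounded \<longleftrightarrow> (\<exists>k. \<forall>s\<in>topspace S. \<forall>n<k. F s n = 0)"
  proof
    assume "\<exists>k. \<forall>s\<in>topspace S. \<forall>n<k. F s n = 0"
    then obtain k where k: "\<forall>s\<in>topspace S. \<forall>n<k. F s n = 0" by blast
    have "F s n = 0" if "n < k" for n s
      using k vanishing that by (cases "s \<in> topspace S") auto
    then show ?bounded by blast
  qed blast
  have "(\<forall>s\<in>topspace S. F s \<in> laurent_r_c r c) \<longleftrightarrow> ?summable" if ?bounded
    using that by (auto simp: laurent_r_c_def)
  then show ?thesis
    unfolding continuous_map_laurent_topology_iff_coefficients[OF assms(1-3)] bounded_iff[symmetric]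
    by blast
qed

theorem mainTheorem11:
  fixes r c \<delta> :: real and S :: "'a topology"
  assumes "0 < r" "r < 1" "0 < c" "0 < \<delta>" "\<delta> < 1"
    and "extremally_disconnected S"
  shows "bij_betw (\<lambda>F n s. F s n)
     {F :: 'a \<Rightarrow> int \<Rightarrow> int. continuous_map S (laurent_topology \<delta> r c) F
        \<and> (\<forall>s. s \<notin> topspace S \<longrightarrow> F s = (\<lambda>_. 0))}
     {a :: int \<Rightarrow> 'a \<Rightarrow> int. (\<exists>k. \<forall>n<k. \<forall>s. a n s = 0)
        \<and> (\<forall>n. continuous_map S (discrete_topology (UNIV :: int set)) (a n))
        \<and> (\<forall>n s. s \<notin> topspace S \<longrightarrow> a n s = 0)
        \<and> (\<forall>s\<in>topspace S. (\<lambda>n. real_of_int \<bar>a n s\<bar> * r powi n) summable_on UNIV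
              \<and> (\<Sum>\<^sub>\<infinity>n. real_of_int \<bar>a n s\<bar> * r powi n) \<le> c)}"
proof -
  have "compact_space S"
    using assms(6) by (simp add: extremally_disconnected_def)
  note continuity = continuous_map_laurent_topology_iff_coefficients_vanishing[OF assms(4,5) this]
  show ?thesis
  proof (rule bij_betw_byWitness[where f' = "\<lambda>a s n. a n s"], goal_cases)
    case 3
    show ?case
      by (rule image_subsetI) (clarsimp simp: continuity)
  next
    case 4
    show ?case
      by (rule image_subsetI) (clarsimp simp: continuity fun_eq_iff)
  qed simp_all
qed

end
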